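(* Let $k\geq 2$ be an integer. For every finite simple graph $G$ with minimum degree $\delta(G)\geq k-1$, $$\gamma_{\times k}(G)\leq k\,\gamma_{k}(G)-(k-1)^2.$$
   Context: All graphs are finite and simple, with vertex set $V(G)$. For $v\in V(G)$, $N(v)$ is its open neighbourhood, and for $D\subseteq V(G)$, $\deg_D(v)=|N(v)\cap D|$. $\delta(G)$ denotes the minimum degree of $G$. A set $D\subseteq V(G)$ is a $k$-dominating set of $G$ if $\deg_D(v)\geq k$ for every $v\in V(G)\setminus D$; the $k$-domination number $\gamma_k(G)$ is the minimum cardinality of a $k$-dominating set. For a positive integer $k\leq \delta(G)+1$, a $k$-tuple dominating set of $G$ is a $k$-dominating set $D$ such that additionally $\deg_D(v)\geq k-1$ for every $v\in D$ (equivalently, every vertex has at least $k$ vertices of $D$ in its closed neighbourhood); the $k$-tuple domination number $\gamma_{\times k}(G)$ is the minimum cardinality of a $k$-tuple dominating set. *)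

theory Defs
  imports Main
begin

definition simple_graph :: "'a set \<Rightarrow> ('a \<Rightarrow> 'a \<Rightarrow> bool) \<Rightarrow> bool" where
  "simple_graph V E \<longleftrightarrow> finite V \<and> (\<forall>u v. E u v \<longrightarrow> u \<in> V \<and> v \<in> V)
     \<and> (\<forall>u v. E u v \<longrightarrow> E v u) \<and> (\<forall>v. \<not> E v v)"

definition nbhd :: "'a set \<Rightarrow> ('a \<Rightarrow> 'a \<Rightarrow> bool) \<Rightarrow> 'a \<Rightarrow> 'a set" where
  "nbhd V E v = {u \<in> V. E v u}"

definition deg_in :: "'a set \<Rightarrow> ('a \<Rightarrow> 'a \<Rightarrow> bool) \<Rightarrow> 'a set \<Rightarrow> 'a \<Rightarrow> nat" where
  "deg_in V E D v = card (nbhd V E v \<inter> D)"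

definition min_degree :: "'a set \<Rightarrow> ('a \<Rightarrow> 'a \<Rightarrow> bool) \<Rightarrow> nat" where
  "min_degree V E = Min ((\<lambda>v. card (nbhd V E v)) ` V)"

definition k_dominating :: "'a set \<Rightarrow> ('a \<Rightarrow> 'a \<Rightarrow> bool) \<Rightarrow> nat \<Rightarrow> 'a set \<Rightarrow> bool" where
  "k_dominating V E k D \<longleftrightarrow> D \<subseteq> V \<and> (\<forall>v \<in> V - D. deg_in V E D v \<ge> k)"

definition k_tuple_dominating :: "'a set \<Rightarrow> ('a \<Rightarrow> 'a \<Rightarrow> bool) \<Rightarrow> nat \<Rightarrow> 'a set \<Rightarrow> bool" where
  "k_tuple_dominating V E k D \<longleftrightarrow> k_dominating V E k D \<and> (\<forall>v \<in> D. deg_in V E D v + 1 \<ge> k)"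

definition k_domination_number :: "'a set \<Rightarrow> ('a \<Rightarrow> 'a \<Rightarrow> bool) \<Rightarrow> nat \<Rightarrow> nat" where
  "k_domination_number V E k = Min (card ` {D. k_dominating V E k D})"

definition k_tuple_domination_number :: "'a set \<Rightarrow> ('a \<Rightarrow> 'a \<Rightarrow> bool) \<Rightarrow> nat \<Rightarrow> nat" where
  "k_tuple_domination_number V E k = Min (card ` {D. k_tuple_dominating V E k D})"

end

theory Submission
  imports Defs
begin

text \<open>Let \<open>D\<close> be a minimum \<open>k\<close>-dominating set, \<open>d = |D| \<ge> k\<close>. If at most \<open>k - 1\<close>
  vertices lie outside \<open>D\<close>, the whole vertex set is \<open>k\<close>-tuple dominating and has at most
  \<open>d + k - 1 \<le> kd - (k - 1)\<^sup>2\<close> vertices. Otherwise add a set \<open>U\<close> of \<open>k - 1\<close> outside vertices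
  to \<open>D\<close> and then, for every \<open>v \<in> D\<close>, just enough further neighbours of \<open>v\<close> to give it
  \<open>k - 1\<close> neighbours in the new set. Each \<open>v \<in> D\<close> needs at most \<open>k - 1 - |N(v) \<inter> U|\<close> of
  them, and since every \<open>u \<in> U\<close> has at least \<open>k\<close> neighbours in \<open>D\<close>, double counting the
  edges between \<open>D\<close> and \<open>U\<close> saves at least \<open>k(k - 1)\<close> vertices in total.\<close>

lemma nbhd_subset: "nbhd V E v \<subseteq> V"
  unfolding nbhd_def by auto

lemma finite_nbhd: "finite V \<Longrightarrow> finite (nbhd V E v)"
  using nbhd_subset finite_subset by metis

lemma nbhd_Int_eq: "B \<subseteq> V \<Longrightarrow> nbhd V E v \<inter> B = {u \<in> B. E v u}"
  unfolding nbhd_def by auto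

lemma min_degree_le_card_nbhd:
  assumes "finite V" and "v \<in> V"
  shows "min_degree V E \<le> card (nbhd V E v)"
  unfolding min_degree_def using assms by (intro Min_le) auto

lemma deg_in_mono:
  assumes "finite V" and "D \<subseteq> D'"
  shows "deg_in V E D v \<le> deg_in V E D' v"
  unfolding deg_in_def using assms finite_nbhd[OF assms(1)] by (intro card_mono) auto

lemma deg_in_le_card: "finite D \<Longrightarrow> deg_in V E D v \<le> card D"
  unfolding deg_in_def by (intro card_mono) auto

lemma min_degree_le_deg_in_V:
  assumes "finite V" and "v \<in> V"
  shows "min_degree V E \<le> deg_in V E V v"
  using min_degree_le_card_nbhd[OF assms] nbhd_subset[of V E v]
  unfolding deg_in_def by (simp add: Int_absorb2)

lemma sum_deg_in_swap:
  assumes "simple_graph V E" and "A \<subseteq> V" and "B \<subseteq> V"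
  shows "(\<Sum>v\<in>A. deg_in V E B v) = (\<Sum>u\<in>B. deg_in V E A u)"
proof -
  have fin: "finite A" "finite B"
    using assms finite_subset unfolding simple_graph_def by auto
  have E_sym: "E u v = E v u" for u v
    using assms(1) unfolding simple_graph_def by blast
  have count: "deg_in V E C v = (\<Sum>u\<in>C. of_bool (E v u))" if "C \<subseteq> V" "finite C" for C v
  proof -
    have "nbhd V E v \<inter> C = C \<inter> {u. E v u}"
      using nbhd_Int_eq[OF that(1)] by blast
    then show ?thesis
      using that(2) by (simp add: deg_in_def)
  qed
  have "(\<Sum>v\<in>A. deg_in V E B v) = (\<Sum>v\<in>A. \<Sum>u\<in>B. of_bool (E v u))"
    using count[OF assms(3) fin(2)] by simp
  also have "\<dots> = (\<Sum>u\<in>B. \<Sum>v\<in>A. of_bool (E u v))"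
    by (subst sum.swap) (simp only: E_sym)
  also have "\<dots> = (\<Sum>u\<in>B. deg_in V E A u)"
    using count[OF assms(2) fin(1)] by simp
  finally show ?thesis .
qed

lemma k_dominating_V: "k_dominating V E k V"
  unfolding k_dominating_def by auto

lemma k_tuple_dominating_V:
  assumes "finite V" and "k \<le> min_degree V E + 1"
  shows "k_tuple_dominating V E k V"
proof -
  have "k \<le> deg_in V E V v + 1" if "v \<in> V" for v
    using min_degree_le_deg_in_V[OF assms(1) that, of E] assms(2) by linarith
  then show ?thesis
    unfolding k_tuple_dominating_def using k_dominating_V by blast
qed

lemma k_tuple_dominating_superset:
  assumes "finite V" and "k_dominating V E k D" and "D \<subseteq> T" and "T \<subseteq> V"
    and "\<And>v. v \<in> D \<Longrightarrow> k \<le> deg_in V E T v + 1"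
  shows "k_tuple_dominating V E k T"
proof -
  have outside: "k \<le> deg_in V E T v" if "v \<in> V - D" for v
  proof -
    have "k \<le> deg_in V E D v"
      using assms(2) that unfolding k_dominating_def by blast
    also have "\<dots> \<le> deg_in V E T v"
      by (rule deg_in_mono[OF assms(1,3)])
    finally show ?thesis .
  qed
  have "k \<le> deg_in V E T v + 1" if "v \<in> T" for v
  proof (cases "v \<in> D")
    case False
    then show ?thesis using outside that assms(4) by fastforce
  qed (rule assms(5))
  then show ?thesis
    unfolding k_tuple_dominating_def k_dominating_def using outside assms(3,4) by blast
qed

lemma k_domination_number_attained:
  assumes "finite V"
  obtains D where "k_dominating V E k D" and "card D = k_domination_number V E k"
proof -
  have "{D. k_dominating V E k D} \<subseteq> Pow V"
    unfolding k_dominating_def by auto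
  then have "finite (card ` {D. k_dominating V E k D})"
    using assms finite_subset by blast
  moreover have "card ` {D. k_dominating V E k D} \<noteq> {}"
    using k_dominating_V by blast
  ultimately have "k_domination_number V E k \<in> card ` {D. k_dominating V E k D}"
    unfolding k_domination_number_def by (rule Min_in)
  then show ?thesis
    using that by auto
qed

lemma k_tuple_domination_number_le:
  assumes "finite V" and "k_tuple_dominating V E k T"
  shows "k_tuple_domination_number V E k \<le> card T"
proof -
  have "{T. k_tuple_dominating V E k T} \<subseteq> Pow V"
    unfolding k_tuple_dominating_def k_dominating_def by auto
  then have "finite {T. k_tuple_dominating V E k T}"
    using assms(1) finite_subset by blast
  then show ?thesis
    unfolding k_tuple_domination_number_def using assms(2) by (intro Min_le) auto
qed

lemma k_dominating_card_ge:
  assumes "simple_graph V E" and "V \<noteq> {}" and "k \<le> min_degree V E + 1"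
    and "k_dominating V E k D"
  shows "k \<le> card D"
proof (cases "D = V")
  case True
  obtain v where v: "v \<in> V" using assms(2) by blast
  have fin: "finite V" using assms(1) unfolding simple_graph_def by blast
  have "nbhd V E v \<subseteq> V - {v}"
    using assms(1) nbhd_subset unfolding simple_graph_def nbhd_def by blast
  then have "card (nbhd V E v) \<le> card V - 1"
    using fin v card_mono[of "V - {v}"] by simp
  moreover have "card V > 0"
    using fin v card_gt_0_iff by blast
  ultimately show ?thesis
    using min_degree_le_card_nbhd[OF fin v, of E] assms(3) unfolding True by linarith
next
  case False
  then obtain w where "w \<in> V - D"
    using assms(4) unfolding k_dominating_def by blast
  then have "k \<le> deg_in V E D w"
    using assms(4) unfolding k_dominating_def by blast
  also have "\<dots> \<le> card D"
    using assms(1,4) finite_subset deg_in_le_card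
    unfolding simple_graph_def k_dominating_def by metis
  finally show ?thesis .
qed

lemma obtain_nbhd_completion:
  assumes "finite V" and "v \<in> V" and "k \<le> min_degree V E + 1"
  obtains A where "A \<subseteq> nbhd V E v - B" and "card A = k - 1 - deg_in V E B v"
proof -
  have "card (nbhd V E v - B) = card (nbhd V E v) - deg_in V E B v"
    unfolding deg_in_def using finite_nbhd[OF assms(1), of E v] by (intro card_Diff_subset_Int) simp
  moreover have "k - 1 \<le> card (nbhd V E v)"
    using min_degree_le_card_nbhd[OF assms(1,2), of E] assms(3) by linarith
  ultimately have "k - 1 - deg_in V E B v \<le> card (nbhd V E v - B)"
    by linarith
  then show ?thesis
    using that obtain_subset_with_card_n by metis
qed

lemma exists_k_tuple_dominating_augment:
  assumes "simple_graph V E" and "k \<le> min_degree V E + 1" and "k_dominating V E k D"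
    and "U \<subseteq> V"
  obtains T where "k_tuple_dominating V E k T"
    and "card T \<le> card D + card U + (\<Sum>v\<in>D. k - 1 - deg_in V E U v)"
proof -
  have fin: "finite V"
    using assms(1) unfolding simple_graph_def by blast
  have D: "D \<subseteq> V" "finite D"
    using assms(3) fin finite_subset unfolding k_dominating_def by auto
  define B where "B = D \<union> U"
  have "\<forall>v\<in>D. \<exists>A. A \<subseteq> nbhd V E v - B \<and> card A = k - 1 - deg_in V E B v"
  proof
    fix v assume "v \<in> D"
    then obtain A where "A \<subseteq> nbhd V E v - B" and "card A = k - 1 - deg_in V E B v"
      using obtain_nbhd_completion[OF fin _ assms(2)] D(1) by blast
    then show "\<exists>A. A \<subseteq> nbhd V E v - B \<and> card A = k - 1 - deg_in V E B v"
      by blast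
  qed
  then obtain A where "\<forall>v\<in>D. A v \<subseteq> nbhd V E v - B \<and> card (A v) = k - 1 - deg_in V E B v"
    by (rule bchoice[elim_format]) blast
  then have A: "\<And>v. v \<in> D \<Longrightarrow> A v \<subseteq> nbhd V E v - B"
    and card_A: "\<And>v. v \<in> D \<Longrightarrow> card (A v) = k - 1 - deg_in V E B v"
    by auto
  define T where "T = B \<union> (\<Union>v\<in>D. A v)"
  have T: "D \<subseteq> T" "T \<subseteq> V"
    unfolding T_def B_def using D(1) assms(4) A nbhd_subset[of V E] by blast+
  have "k \<le> deg_in V E T v + 1" if "v \<in> D" for v
  proof -
    have "deg_in V E B v + card (A v) = card (nbhd V E v \<inter> B \<union> A v)"
      unfolding deg_in_def using A[OF that] finite_subset[OF A[OF that]] finite_nbhd[OF fin]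
      by (subst card_Un_disjoint) auto
    also have "\<dots> \<le> deg_in V E T v"
      unfolding deg_in_def T_def using A[OF that] that finite_nbhd[OF fin]
      by (intro card_mono) auto
    finally show ?thesis
      using card_A[OF that] by linarith
  qed
  then have "k_tuple_dominating V E k T"
    using k_tuple_dominating_superset[OF fin assms(3) T] by blast
  moreover have "card T \<le> card D + card U + (\<Sum>v\<in>D. k - 1 - deg_in V E U v)"
  proof -
    have "card T \<le> card B + card (\<Union>v\<in>D. A v)"
      unfolding T_def by (rule card_Un_le)
    also have "card B \<le> card D + card U"
      unfolding B_def by (rule card_Un_le)
    also have "card (\<Union>v\<in>D. A v) \<le> (\<Sum>v\<in>D. card (A v))"
      using D(2) by (rule card_UN_le)
    also have "\<dots> \<le> (\<Sum>v\<in>D. k - 1 - deg_in V E U v)"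
      unfolding B_def using card_A deg_in_mono[OF fin, of U "D \<union> U"]
      by (intro sum_mono) (simp add: B_def diff_le_mono2)
    finally show ?thesis by simp
  qed
  ultimately show ?thesis
    using that by blast
qed

lemma exists_k_tuple_dominating_card_le:
  assumes "simple_graph V E" and "V \<noteq> {}" and "1 \<le> k" and "k \<le> min_degree V E + 1"
    and "k_dominating V E k D"
  obtains T where "k_tuple_dominating V E k T"
    and "int (card T) \<le> int k * int (card D) - (int k - 1)^2"
proof -
  have fin: "finite V"
    using assms(1) unfolding simple_graph_def by blast
  have D: "D \<subseteq> V"
    using assms(5) unfolding k_dominating_def by blast
  have card_D: "k \<le> card D"
    using k_dominating_card_ge[OF assms(1,2,4,5)] .
  show ?thesis
  proof (cases "card (V - D) \<le> k - 1")
    case True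
    have "card V = card D + card (V - D)"
      using D fin by (metis card_Diff_subset finite_subset le_add_diff_inverse card_mono)
    moreover have "int (k - 1) * (int (card D) - int k) \<ge> 0"
      using card_D by simp
    ultimately have "int (card V) \<le> int k * int (card D) - (int k - 1)^2"
      using True assms(3) by (simp add: algebra_simps power2_eq_square of_nat_diff)
    then show ?thesis
      using that k_tuple_dominating_V[OF fin assms(4)] by blast
  next
    case False
    then obtain U where U: "U \<subseteq> V - D" "card U = k - 1"
      by (meson nat_le_linear obtain_subset_with_card_n)
    obtain T where T: "k_tuple_dominating V E k T"
      and card_T: "card T \<le> card D + card U + (\<Sum>v\<in>D. k - 1 - deg_in V E U v)"
      using exists_k_tuple_dominating_augment[OF assms(1,4,5)] U(1) by blast
    have fin_U: "finite U"
      using U(1) fin finite_subset by blast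
    have "(\<Sum>u\<in>U. k) \<le> (\<Sum>u\<in>U. deg_in V E D u)"
      using assms(5) U(1) unfolding k_dominating_def by (intro sum_mono) blast
    also have "\<dots> = (\<Sum>v\<in>D. deg_in V E U v)"
      using sum_deg_in_swap[OF assms(1) D, of U] U(1) by (metis Diff_subset order_trans)
    finally have edges: "(k - 1) * k \<le> (\<Sum>v\<in>D. deg_in V E U v)"
      using U(2) by simp
    have "int (\<Sum>v\<in>D. k - 1 - deg_in V E U v)
        = (\<Sum>v\<in>D. int (k - 1) - int (deg_in V E U v))"
      unfolding of_nat_sum using deg_in_le_card[OF fin_U] U(2)
      by (intro sum.cong refl) (metis of_nat_diff)
    also have "\<dots> = int (card D) * int (k - 1) - int (\<Sum>v\<in>D. deg_in V E U v)"
      by (simp add: sum_subtractf)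
    finally have "int (card T) \<le> int (card D) + int (k - 1) + int (card D) * int (k - 1)
        - int ((k - 1) * k)"
      using card_T edges U(2) by linarith
    then show ?thesis
      using that T assms(3) by (simp add: of_nat_diff algebra_simps power2_eq_square)
  qed
qed

theorem mainTheorem1:
  fixes V :: "'a set" and E :: "'a \<Rightarrow> 'a \<Rightarrow> bool" and k :: nat
  assumes "simple_graph V E" and "V \<noteq> {}" and "k \<ge> 2"
    and "min_degree V E \<ge> k - 1"
  shows "int (k_tuple_domination_number V E k)
           \<le> int k * int (k_domination_number V E k) - (int k - 1)^2"
proof -
  have fin: "finite V"
    using assms(1) unfolding simple_graph_def by blast
  obtain D where D: "k_dominating V E k D" and card_D: "card D = k_domination_number V E k"
    using k_domination_number_attained[OF fin] .
  have "1 \<le> k" and "k \<le> min_degree V E + 1"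
    using assms(3,4) by linarith+
  then obtain T where T: "k_tuple_dominating V E k T"
    and card_T: "int (card T) \<le> int k * int (card D) - (int k - 1)^2"
    using exists_k_tuple_dominating_card_le[OF assms(1,2) _ _ D] by blast
  have "k_tuple_domination_number V E k \<le> card T"
    using k_tuple_domination_number_le[OF fin T] .
  then show ?thesis
    using card_T unfolding card_D by linarith
qed

end
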